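(* Let $\mathcal{X}$ be a finite set, $\pi$ a probability mass function on $\mathcal{X}$ with full support, and $P$ a $\pi$-reversible transition matrix on $\mathcal{X}$. Let a group $\mathcal{G}$ act on $\mathcal{X}$ with orbits $\mathcal{O}_1,\dots,\mathcal{O}_k$, and let $G$ be the associated Gibbs orbit kernel. Then $\gamma(P)\ge\gamma(GPG)$. Equality holds when the maximum-achieving orbit $\mathcal{O}_i$ (in the definition of $\gamma(P)$) satisfies that $\sum_{y\notin\mathcal{O}_i}P(x,y)$ is the same for all $x\in\mathcal{O}_i$.
   Context: The Gibbs orbit kernel is $G(x,y)=\pi(y)/\pi(\mathcal{O}(x))$ if $y\in\mathcal{O}(x)$ (the orbit of $x$), and $0$ otherwise, where $\pi(A)=\sum_{z\in A}\pi(z)$. For a transition matrix $K$, $\gamma(K):=\max_{i\in\{1,\dots,k\}}\max_{x\in\mathcal{O}_i}\sum_{y\in\mathcal{X}\setminus\mathcal{O}_i}K(x,y)$. *)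

theory Defs
  imports Complex_Main "HOL-Algebra.Group_Action"
begin

text \<open>Transition matrices on a finite state space X are functions 'a => 'a => real,
  only their values on X x X matter.\<close>

definition pmf_full_support :: "'a set \<Rightarrow> ('a \<Rightarrow> real) \<Rightarrow> bool" where
  "pmf_full_support X \<pi> \<longleftrightarrow> (\<forall>x\<in>X. \<pi> x > 0) \<and> (\<Sum>x\<in>X. \<pi> x) = 1"

definition transition_matrix :: "'a set \<Rightarrow> ('a \<Rightarrow> 'a \<Rightarrow> real) \<Rightarrow> bool" where
  "transition_matrix X P \<longleftrightarrow>
     (\<forall>x\<in>X. \<forall>y\<in>X. P x y \<ge> 0) \<and> (\<forall>x\<in>X. (\<Sum>y\<in>X. P x y) = 1)"

definition reversible :: "'a set \<Rightarrow> ('a \<Rightarrow> real) \<Rightarrow> ('a \<Rightarrow> 'a \<Rightarrow> real) \<Rightarrow> bool" where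
  "reversible X \<pi> P \<longleftrightarrow> (\<forall>x\<in>X. \<forall>y\<in>X. \<pi> x * P x y = \<pi> y * P y x)"

definition matmul :: "'a set \<Rightarrow> ('a \<Rightarrow> 'a \<Rightarrow> real) \<Rightarrow> ('a \<Rightarrow> 'a \<Rightarrow> real) \<Rightarrow> 'a \<Rightarrow> 'a \<Rightarrow> real" where
  "matmul X A B x y = (\<Sum>z\<in>X. A x z * B z y)"

definition gibbs_orbit_kernel ::
  "('g, 'm) monoid_scheme \<Rightarrow> ('g \<Rightarrow> 'a \<Rightarrow> 'a) \<Rightarrow> ('a \<Rightarrow> real) \<Rightarrow> 'a \<Rightarrow> 'a \<Rightarrow> real" where
  "gibbs_orbit_kernel G \<phi> \<pi> x y =
     (if y \<in> orbit G \<phi> x then \<pi> y / (\<Sum>z\<in>orbit G \<phi> x. \<pi> z) else 0)"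

definition escape :: "'a set \<Rightarrow> ('a \<Rightarrow> 'a \<Rightarrow> real) \<Rightarrow> 'a set \<Rightarrow> 'a \<Rightarrow> real" where
  "escape X K Orb x = (\<Sum>y\<in>X - Orb. K x y)"

definition gamma ::
  "('g, 'm) monoid_scheme \<Rightarrow> 'a set \<Rightarrow> ('g \<Rightarrow> 'a \<Rightarrow> 'a) \<Rightarrow> ('a \<Rightarrow> 'a \<Rightarrow> real) \<Rightarrow> real" where
  "gamma G X \<phi> K = Max ((\<lambda>Orb. Max (escape X K Orb ` Orb)) ` orbits G X \<phi>)"

end

theory Submission
  imports Defs
begin

text \<open>Started anywhere in an orbit O, the chain GPG first moves to a \<pi>-distributed point of O,
  then takes one step of P, and finally leaves O exactly when that step did, since G never
  moves between orbits. Hence its escape probability from O is the \<pi>-average over O of the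
  escape probability of P, which is at most the maximum of the latter, with equality when that
  escape probability is constant on O.\<close>

definition weighted_mean :: "('a \<Rightarrow> real) \<Rightarrow> 'a set \<Rightarrow> ('a \<Rightarrow> real) \<Rightarrow> real" where
  "weighted_mean w A f = (\<Sum>z\<in>A. w z * f z) / (\<Sum>z\<in>A. w z)"

lemma weighted_mean_le:
  assumes "\<And>z. z \<in> A \<Longrightarrow> w z \<ge> 0" "\<And>z. z \<in> A \<Longrightarrow> f z \<le> c" "(\<Sum>z\<in>A. w z) > 0"
  shows "weighted_mean w A f \<le> c"
proof -
  have "(\<Sum>z\<in>A. w z * f z) \<le> (\<Sum>z\<in>A. w z * c)"
    using assms(1,2) by (intro sum_mono mult_left_mono)
  also have "\<dots> = c * (\<Sum>z\<in>A. w z)"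
    by (simp add: sum_distrib_left mult.commute)
  finally show ?thesis
    using assms(3) by (simp add: weighted_mean_def pos_divide_le_eq)
qed

lemma weighted_mean_const:
  assumes "\<And>z. z \<in> A \<Longrightarrow> f z = c" "(\<Sum>z\<in>A. w z) \<noteq> 0"
  shows "weighted_mean w A f = c"
proof -
  have "(\<Sum>z\<in>A. w z * f z) = c * (\<Sum>z\<in>A. w z)"
    using assms(1) by (simp add: sum_distrib_left mult.commute)
  then show ?thesis
    using assms(2) by (simp add: weighted_mean_def)
qed

lemma escape_matmul: "escape X (matmul X A B) Orb x = (\<Sum>w\<in>X. A x w * escape X B Orb w)"
  unfolding escape_def matmul_def sum_distrib_left by (rule sum.swap)

lemma (in group_action) orbit_subset: "x \<in> E \<Longrightarrow> orbit G \<phi> x \<subseteq> E"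
  unfolding orbit_def using element_image by blast

lemma (in group_action) orbits_subset: "Orb \<in> orbits G E \<phi> \<Longrightarrow> Orb \<subseteq> E"
  unfolding orbits_def using orbit_subset by blast

lemma (in group_action) orbit_in_orbits: "x \<in> E \<Longrightarrow> orbit G \<phi> x \<in> orbits G E \<phi>"
  unfolding orbits_def by blast

lemma (in group_action) finite_orbits: "finite E \<Longrightarrow> finite (orbits G E \<phi>)"
  by (simp add: orbits_def setcompr_eq_image)

lemma (in group_action) orbit_eq_if_mem_orbits:
  assumes "Orb \<in> orbits G E \<phi>" "x \<in> Orb"
  shows "orbit G \<phi> x = Orb"
proof -
  have "x \<in> E"
    using assms orbits_subset by blast
  then show ?thesis
    using disjoint_union[OF orbit_in_orbits assms(1)] orbit_refl assms(2) by blast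
qed

lemma (in group_action) escape_le_gamma:
  assumes "finite E" "Orb \<in> orbits G E \<phi>" "x \<in> Orb"
  shows "escape E K Orb x \<le> gamma G E \<phi> K"
proof -
  have "finite Orb"
    using assms(1) orbits_subset[OF assms(2)] by (rule finite_subset[rotated])
  then have "escape E K Orb x \<le> Max (escape E K Orb ` Orb)"
    using assms(3) by simp
  also have "\<dots> \<le> gamma G E \<phi> K"
    unfolding gamma_def using finite_orbits[OF assms(1)] assms(2) by (intro Max_ge) auto
  finally show ?thesis .
qed

lemma (in group_action) gamma_eq_Max_if_escape_orbitwise_const:
  assumes "\<And>Orb x. Orb \<in> orbits G E \<phi> \<Longrightarrow> x \<in> Orb \<Longrightarrow> escape E K Orb x = c Orb"
  shows "gamma G E \<phi> K = Max (c ` orbits G E \<phi>)"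
proof -
  have "escape E K Orb ` Orb = {c Orb}" if "Orb \<in> orbits G E \<phi>" for Orb
    using that assms orbit_refl by (auto simp: orbits_def)
  then show ?thesis
    unfolding gamma_def by (simp cong: image_cong)
qed

locale weighted_action = group_action G E \<phi> for G :: "('g, 'm) monoid_scheme" and E \<phi> +
  fixes \<pi> :: "'a \<Rightarrow> real"
  assumes finite_E: "finite E" and weight_pos: "\<And>x. x \<in> E \<Longrightarrow> \<pi> x > 0"
begin

lemma orbit_weight_pos:
  assumes "x \<in> E"
  shows "(\<Sum>z\<in>orbit G \<phi> x. \<pi> z) > 0"
proof -
  have "orbit G \<phi> x \<subseteq> E"
    using assms by (rule orbit_subset)
  then show ?thesis
    using orbit_refl[OF assms] finite_E weight_pos
    by (intro sum_pos2[where i = x]) (auto intro: finite_subset less_imp_le)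
qed

lemma orbits_weight_pos: "Orb \<in> orbits G E \<phi> \<Longrightarrow> (\<Sum>z\<in>Orb. \<pi> z) > 0"
  by (auto simp: orbits_def orbit_weight_pos)

lemma sum_gibbs_orbit_kernel:
  assumes "x \<in> E" "orbit G \<phi> x \<subseteq> A" "A \<subseteq> E"
  shows "(\<Sum>y\<in>A. gibbs_orbit_kernel G \<phi> \<pi> x y) = 1"
proof -
  have "(\<Sum>y\<in>A. gibbs_orbit_kernel G \<phi> \<pi> x y) = (\<Sum>y\<in>orbit G \<phi> x. gibbs_orbit_kernel G \<phi> \<pi> x y)"
    using assms finite_E finite_subset
    by (intro sum.mono_neutral_right) (auto simp: gibbs_orbit_kernel_def)
  also have "\<dots> = (\<Sum>y\<in>orbit G \<phi> x. \<pi> y / (\<Sum>z\<in>orbit G \<phi> x. \<pi> z))"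
    by (simp add: gibbs_orbit_kernel_def)
  also have "\<dots> = 1"
    using orbit_weight_pos[OF assms(1)] by (simp add: sum_divide_distrib[symmetric])
  finally show ?thesis .
qed

lemma escape_gibbs_orbit_kernel:
  assumes "Orb \<in> orbits G E \<phi>" "w \<in> E"
  shows "escape E (gibbs_orbit_kernel G \<phi> \<pi>) Orb w = (if w \<in> Orb then 0 else 1)"
proof (cases "w \<in> Orb")
  case True
  then show ?thesis
    using orbit_eq_if_mem_orbits[OF assms(1)] by (simp add: escape_def gibbs_orbit_kernel_def)
next
  case False
  then have "orbit G \<phi> w \<noteq> Orb"
    using orbit_refl[OF assms(2)] by blast
  then have "orbit G \<phi> w \<inter> Orb = {}"
    using disjoint_union[OF orbit_in_orbits[OF assms(2)] assms(1)] by blast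
  then have "orbit G \<phi> w \<subseteq> E - Orb"
    using orbit_subset[OF assms(2)] by blast
  then show ?thesis
    using False assms(2) by (simp add: escape_def sum_gibbs_orbit_kernel)
qed

lemma escape_gibbs_conjugate:
  assumes "Orb \<in> orbits G E \<phi>" "x \<in> Orb"
  defines "K \<equiv> gibbs_orbit_kernel G \<phi> \<pi>"
  shows "escape E (matmul E (matmul E K P) K) Orb x = weighted_mean \<pi> Orb (escape E P Orb)"
proof -
  have Orb: "orbit G \<phi> x = Orb" "Orb \<subseteq> E"
    using orbit_eq_if_mem_orbits orbits_subset assms(1,2) by blast+
  have "escape E (matmul E (matmul E K P) K) Orb x
      = (\<Sum>w\<in>E. matmul E K P x w * (if w \<in> Orb then 0 else 1))"
    using assms(1) by (simp add: escape_matmul escape_gibbs_orbit_kernel K_def)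
  also have "\<dots> = escape E (matmul E K P) Orb x"
    unfolding escape_def using finite_E by (intro sum.mono_neutral_cong_right) auto
  also have "\<dots> = (\<Sum>z\<in>E. K x z * escape E P Orb z)"
    by (rule escape_matmul)
  also have "\<dots> = (\<Sum>z\<in>Orb. K x z * escape E P Orb z)"
    using Orb finite_E by (intro sum.mono_neutral_right) (auto simp: K_def gibbs_orbit_kernel_def)
  also have "\<dots> = weighted_mean \<pi> Orb (escape E P Orb)"
    using Orb by (simp add: K_def gibbs_orbit_kernel_def weighted_mean_def sum_divide_distrib)
  finally show ?thesis .
qed

lemma weighted_mean_escape_le_gamma:
  assumes "Orb \<in> orbits G E \<phi>"
  shows "weighted_mean \<pi> Orb (escape E P Orb) \<le> gamma G E \<phi> P"
proof -
  have "Orb \<subseteq> E"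
    using assms by (rule orbits_subset)
  then show ?thesis
    using assms weight_pos orbits_weight_pos escape_le_gamma[OF finite_E]
    by (intro weighted_mean_le) (auto intro: less_imp_le)
qed

lemma gamma_gibbs_conjugate:
  defines "K \<equiv> gibbs_orbit_kernel G \<phi> \<pi>"
  shows "gamma G E \<phi> (matmul E (matmul E K P) K)
           = Max ((\<lambda>Orb. weighted_mean \<pi> Orb (escape E P Orb)) ` orbits G E \<phi>)"
  unfolding K_def by (rule gamma_eq_Max_if_escape_orbitwise_const) (rule escape_gibbs_conjugate)

end

theorem proposition2p5:
  fixes G :: "('g, 'm) monoid_scheme" and X :: "'a set" and \<phi> :: "'g \<Rightarrow> 'a \<Rightarrow> 'a"
    and \<pi> :: "'a \<Rightarrow> real" and P :: "'a \<Rightarrow> 'a \<Rightarrow> real"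
  assumes "finite X" and "X \<noteq> {}"
    and "pmf_full_support X \<pi>"
    and "transition_matrix X P"
    and "reversible X \<pi> P"
    and "group_action G X \<phi>"
  defines "K \<equiv> gibbs_orbit_kernel G \<phi> \<pi>"
  shows "gamma G X \<phi> P \<ge> gamma G X \<phi> (matmul X (matmul X K P) K) \<and>
         (\<forall>Orb\<in>orbits G X \<phi>.
            (\<exists>x\<in>Orb. escape X P Orb x = gamma G X \<phi> P) \<and>
            (\<forall>x\<in>Orb. \<forall>x'\<in>Orb. escape X P Orb x = escape X P Orb x') \<longrightarrow>
            gamma G X \<phi> P = gamma G X \<phi> (matmul X (matmul X K P) K))"
proof -
  interpret weighted_action G X \<phi> \<pi>
    using assms(1,3,6) by (intro weighted_action.intro weighted_action_axioms.intro)
      (auto simp: pmf_full_support_def)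
  define avg where "avg Orb = weighted_mean \<pi> Orb (escape X P Orb)" for Orb
  have orbits_finite: "finite (orbits G X \<phi>)"
    using assms(1) by (rule finite_orbits)
  have orbits_nonempty: "orbits G X \<phi> \<noteq> {}"
    using assms(2) orbit_in_orbits by blast
  have gamma_conj: "gamma G X \<phi> (matmul X (matmul X K P) K) = Max (avg ` orbits G X \<phi>)"
    unfolding K_def avg_def by (rule gamma_gibbs_conjugate)
  have gamma_le: "gamma G X \<phi> (matmul X (matmul X K P) K) \<le> gamma G X \<phi> P"
    unfolding gamma_conj using orbits_finite orbits_nonempty
    by (simp add: Max_le_iff avg_def weighted_mean_escape_le_gamma)
  have gamma_eq: "gamma G X \<phi> P = gamma G X \<phi> (matmul X (matmul X K P) K)"
    if Orb: "Orb \<in> orbits G X \<phi>" and attained: "escape X P Orb x = gamma G X \<phi> P" "x \<in> Orb"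
      and const: "\<forall>x\<in>Orb. \<forall>x'\<in>Orb. escape X P Orb x = escape X P Orb x'" for Orb x
  proof -
    have "escape X P Orb z = gamma G X \<phi> P" if "z \<in> Orb" for z
      using const attained that by metis
    then have "avg Orb = gamma G X \<phi> P"
      unfolding avg_def using orbits_weight_pos[OF Orb] by (intro weighted_mean_const) auto
    moreover have "avg Orb \<le> gamma G X \<phi> (matmul X (matmul X K P) K)"
      unfolding gamma_conj using orbits_finite Orb by (intro Max_ge) simp_all
    ultimately show ?thesis
      using gamma_le by linarith
  qed
  show ?thesis
    using gamma_le gamma_eq by blast
qed

end
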